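(* Let $C$ be a binary $[n,k]$ code with $C^\perp\neq\{\bm 0\}$ and $3<d(C^\perp)<k+1$. Then $\gamma(C)\le k-d(C^\perp)+2$.
   Context: An $[n,k]$ code over $\mathbb{F}_q$ is a $k$-dimensional subspace $C\subseteq\mathbb{F}_q^n$; binary means $q=2$; write $E=\{1,\dots,n\}$. For $\bm{x}\in\mathbb{F}_q^n$, $\mathrm{supp}(\bm{x})=\{i: x_i\neq 0\}$ and the weight is $|\mathrm{supp}(\bm{x})|$; for $B\subseteq\mathbb{F}_q^n$, $\mathrm{Supp}(B)=\bigcup_{\bm{x}\in B}\mathrm{supp}(\bm{x})$. $C^\perp$ is the dual code with respect to the standard inner product and $d(C^\perp)$ is the minimum weight of a nonzero codeword of $C^\perp$. The covering dimension is $\gamma(C)=\infty$ if $\mathrm{Supp}(C)\neq E$, and otherwise $\gamma(C)$ is the least positive integer $r$ such that $C$ has an $r$-dimensional subspace $D$ with $\mathrm{Supp}(D)=E$. *)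

theory Defs
  imports "HOL-Analysis.Analysis" "HOL-Library.Extended_Nat"
begin

text \<open>Codes of length n over a field F are subspaces of F^n, modelled as
  'F ^ 'n with the finite index type 'n (so n = CARD('n)); linear structure
  is the library interpretation vec (scalar multiplication *s).\<close>

definition supp :: "'a::zero ^ 'n \<Rightarrow> 'n set" where
  "supp x = {i. x $ i \<noteq> 0}"

definition Supp :: "('a::zero ^ 'n) set \<Rightarrow> 'n set" where
  "Supp B = (\<Union>x\<in>B. supp x)"

definition wt :: "'a::zero ^ 'n \<Rightarrow> nat" where
  "wt x = card (supp x)"

definition dotp :: "'a::comm_semiring_0 ^ 'n \<Rightarrow> 'a ^ 'n \<Rightarrow> 'a" where
  "dotp x y = (\<Sum>i\<in>UNIV. x $ i * y $ i)"

definition dual_code :: "('a::field ^ 'n) set \<Rightarrow> ('a ^ 'n) set" where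
  "dual_code C = {y. \<forall>x\<in>C. dotp x y = 0}"

definition min_dist :: "('a::zero ^ 'n) set \<Rightarrow> nat" where
  "min_dist D = Min {wt y | y. y \<in> D \<and> y \<noteq> 0}"

definition cov_dim :: "('a::field ^ 'n) set \<Rightarrow> enat" where
  "cov_dim C = (if Supp C \<noteq> UNIV then \<infinity>
     else enat (LEAST r. 0 < r \<and> (\<exists>D. vec.subspace D \<and> D \<subseteq> C \<and> vec.dim D = r \<and> Supp D = UNIV)))"

end

theory Submission
  imports Defs
begin

(* Write d for the minimum distance of the dual code. A dual word supported on fewer than d
   coordinates vanishes, so C maps onto every set of fewer than d coordinates. It suffices to
   find a set J of d - 1 coordinates such that every coordinate is nonzero on some codeword
   constant on J: the codewords constant on J then form a subcode with full support, and the
   d - 2 independent conditions x_j = x_a0 (j in J) cut its dimension down to k - d + 2.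
   A coordinate j outside J is only in danger if some dual word is supported on J + j and
   nonzero at j; such a word has weight d, so over GF(2) it is the indicator of J + j.
   For even d, any J works: orthogonality of that indicator to a codeword equal to 1 on J forces
   the codeword to be 1 at j. For odd d, choose a set I of d coordinates carrying no nonzero
   dual word (it exists since dim C > d - 1) and J = I - p. The point p is bad only if a dual
   word exchanges p for an outside coordinate, and exchange words for two distinct p would
   differ by a nonzero dual word of weight at most 4 < d. *)

definition restr :: "'n set \<Rightarrow> 'a::zero ^ 'n \<Rightarrow> 'a ^ 'n" where
  "restr K x = (\<chi> i. if i \<in> K then x $ i else 0)"

definition const_subcode :: "('a ^ 'n) set \<Rightarrow> 'n set \<Rightarrow> ('a ^ 'n) set" where
  "const_subcode C J = {x \<in> C. \<exists>c. \<forall>j\<in>J. x $ j = c}"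

lemma linear_restr: "Vector_Spaces.linear (*s) (*s) (restr K :: 'a::field ^ 'n \<Rightarrow> _)"
  by unfold_locales (auto simp: restr_def vec_eq_iff)

lemma dotp_restr: "dotp x (restr K y) = dotp (restr K x) y"
  unfolding dotp_def restr_def by (rule sum.cong) auto

lemma dotp_axis: "dotp (axis j 1) y = (y $ j :: 'a::comm_semiring_1)"
proof -
  have "dotp (axis j 1) y = (\<Sum>i\<in>UNIV. if i = j then y $ i else 0)"
    unfolding dotp_def axis_def by (rule sum.cong) auto
  then show ?thesis by simp
qed

lemma dotp_indicator: "dotp x (\<chi> i. if i \<in> K then 1 else 0) = (\<Sum>i\<in>K. x $ i :: 'a::comm_semiring_1)"
  unfolding dotp_def by (simp add: if_distrib sum.inter_restrict[symmetric] cong: if_cong)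

lemma dotp_zero_right [simp]: "dotp x 0 = 0"
  by (simp add: dotp_def)

lemma dotp_dual_code: "x \<in> C \<Longrightarrow> y \<in> dual_code C \<Longrightarrow> dotp x y = 0"
  by (simp add: dual_code_def)

lemma dual_code_diff: "y \<in> dual_code C \<Longrightarrow> z \<in> dual_code C \<Longrightarrow> y - z \<in> dual_code C"
  by (auto simp: dual_code_def dotp_def right_diff_distrib sum_subtractf)

lemma binary_field_cases:
  assumes "CARD('a::field) = 2"
  shows "(x::'a) = 0 \<or> x = 1"
proof -
  have "finite (UNIV :: 'a set)"
    using assms by (metis card.infinite zero_neq_numeral)
  then have "{0, 1} = (UNIV :: 'a set)"
    by (rule card_subset_eq) (auto simp: assms)
  then show ?thesis by auto
qed

lemma binary_of_nat:
  assumes "CARD('a::field) = 2"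
  shows "(of_nat n :: 'a) = (if even n then 0 else 1)"
proof -
  have "(1::'a) + 1 = 0"
    using binary_field_cases[OF assms, of "1 + 1"] by (metis add_cancel_right_right one_neq_zero)
  then show ?thesis
    by (induction n) (auto simp: algebra_simps)
qed

lemma wt_le_card: "supp y \<subseteq> K \<Longrightarrow> wt y \<le> card K"
  unfolding wt_def by (simp add: card_mono)

lemma min_dist_le_wt:
  fixes D :: "('a::zero ^ 'n) set"
  assumes "y \<in> D" "y \<noteq> 0"
  shows "min_dist D \<le> wt y"
proof -
  have "{wt y | y. y \<in> D \<and> y \<noteq> 0} \<subseteq> {..CARD('n)}"
    using wt_le_card[of _ "UNIV :: 'n set"] by auto
  then have "finite {wt y | y. y \<in> D \<and> y \<noteq> 0}"
    using finite_subset by blast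
  then show ?thesis
    unfolding min_dist_def using assms by (intro Min_le) auto
qed

lemma dual_word_eq_0_if_short:
  assumes "y \<in> dual_code C" "supp y \<subseteq> K" "card K < min_dist (dual_code C)"
  shows "y = 0"
  using min_dist_le_wt[OF assms(1)] wt_le_card[OF assms(2)] assms(3) by fastforce

lemma dual_word_eq_indicator:
  assumes "CARD('a::field) = 2"
    and "y \<in> dual_code C" "y \<noteq> 0" "supp (y :: 'a ^ 'n) \<subseteq> K" "card K = min_dist (dual_code C)"
  shows "y = (\<chi> i. if i \<in> K then 1 else 0)"
proof -
  have "card K \<le> card (supp y)"
    using min_dist_le_wt[OF assms(2,3)] assms(5) unfolding wt_def by simp
  then have "supp y = K"
    using assms(4) by (simp add: card_seteq)
  then show ?thesis
    using binary_field_cases[OF assms(1)] by (auto simp: supp_def vec_eq_iff)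
qed

lemma subspace_separating_vector:
  fixes P :: "('a::field ^ 'n) set"
  assumes subP: "vec.subspace P" and wP: "w \<notin> P"
  shows "\<exists>y. (\<forall>x\<in>P. dotp x y = 0) \<and> dotp w y = 1"
proof -
  obtain B where B: "B \<subseteq> P" "vec.independent B" "P \<subseteq> vec.span B"
    by (rule vec.basis_exists)
  have spanB: "vec.span B = P"
    using vec.span_subspace[OF B(1,3) subP] .
  then have w_notin: "w \<notin> vec.span B"
    using wP by simp
  have indep: "vec.independent (insert w B)"
    using vec.independent_insertI[OF w_notin B(2)] .
  define f where "f = vec.construct (insert w B) (\<lambda>b. if b = w then (1::'a ^ 'n) else 0)"
  have lin: "Vector_Spaces.linear (*s) (*s) f"
    unfolding f_def by (rule vec.linear_construct[OF indep])
  have f_basis: "f b = (if b = w then 1 else 0)" if "b \<in> insert w B" for b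
    unfolding f_def using vec.construct_basis[OF indep that] .
  have f_P: "f x = 0" if "x \<in> P" for x
  proof (rule vec.linear_eq_on[OF lin vec.linear_zero])
    show "x \<in> vec.span B" using that spanB by simp
  next
    fix b assume "b \<in> B"
    moreover have "b \<noteq> w" using \<open>b \<in> B\<close> w_notin vec.span_base by metis
    ultimately show "f b = 0" using f_basis by simp
  qed
  \<comment> \<open>any fixed coordinate of f is a linear functional with the required values\<close>
  fix i0 :: 'n
  define y where "y = (\<chi> j. f (axis j 1) $ i0)"
  have "dotp x y = f x $ i0" for x
  proof -
    have "f x $ i0 = (\<Sum>j\<in>UNIV. x $ j * f (axis j 1) $ i0)"
      by (rule linear_componentwise[OF lin])
    then show ?thesis
      by (simp add: dotp_def y_def)
  qed
  then have "\<forall>x\<in>P. dotp x y = 0" "dotp w y = 1"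
    using f_P f_basis[of w] by simp_all
  then show ?thesis by blast
qed

lemma codeword_extends_or_dual_obstruction:
  fixes C :: "('a::field ^ 'n) set"
  assumes "vec.subspace C"
  shows "(\<exists>x\<in>C. \<forall>i\<in>K. x $ i = v $ i) \<or> (\<exists>y\<in>dual_code C. supp y \<subseteq> K \<and> dotp v y \<noteq> 0)"
proof (cases "\<exists>x\<in>C. \<forall>i\<in>K. x $ i = v $ i")
  case True
  then show ?thesis ..
next
  case no_ext: False
  have not_in: "restr K v \<notin> restr K ` C"
  proof
    assume "restr K v \<in> restr K ` C"
    then obtain x where x: "x \<in> C" "restr K v = restr K x" by blast
    have "x $ i = v $ i" if "i \<in> K" for i
    proof -
      have "restr K x $ i = restr K v $ i"
        using x(2) by simp
      with that show ?thesis
        by (simp add: restr_def)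
    qed
    with no_ext x(1) show False by blast
  qed
  obtain y where y: "\<forall>x\<in>restr K ` C. dotp x y = 0" "dotp (restr K v) y = 1"
    using subspace_separating_vector[OF vec.linear_subspace_image[OF linear_restr assms] not_in]
    by blast
  have "restr K y \<in> dual_code C"
    using y(1) by (simp add: dual_code_def dotp_restr)
  moreover have "supp (restr K y) \<subseteq> K"
    by (auto simp: supp_def restr_def)
  moreover have "dotp v (restr K y) \<noteq> 0"
    using y(2) by (simp add: dotp_restr)
  ultimately show ?thesis by blast
qed

lemma codeword_extends_if_short:
  assumes "vec.subspace C" "card K < min_dist (dual_code C)"
  shows "\<exists>x\<in>C. \<forall>i\<in>K. x $ i = v $ i"
proof -
  have "\<not> (\<exists>y\<in>dual_code C. supp y \<subseteq> K \<and> dotp v y \<noteq> 0)"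
    using dual_word_eq_0_if_short[OF _ _ assms(2)] by (metis dotp_zero_right)
  then show ?thesis
    using codeword_extends_or_dual_obstruction[OF assms(1), of K v] by blast
qed

lemma Supp_eq_UNIV_iff: "Supp D = UNIV \<longleftrightarrow> (\<forall>j. \<exists>x\<in>D. x $ j \<noteq> 0)"
  by (auto simp: Supp_def supp_def)

lemma subspace_const_subcode:
  assumes "vec.subspace C"
  shows "vec.subspace (const_subcode C J)"
  unfolding vec.subspace_def
proof (intro conjI ballI allI)
  show "0 \<in> const_subcode C J"
    using vec.subspace_0[OF assms] by (auto simp: const_subcode_def)
next
  fix x y
  assume "x \<in> const_subcode C J" "y \<in> const_subcode C J"
  then obtain a b where "x \<in> C" "y \<in> C" "\<forall>j\<in>J. x $ j = a" "\<forall>j\<in>J. y $ j = b"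
    by (auto simp: const_subcode_def)
  then show "x + y \<in> const_subcode C J"
    using vec.subspace_add[OF assms] by (auto simp: const_subcode_def intro!: exI[of _ "a + b"])
next
  fix c x
  assume "x \<in> const_subcode C J"
  then obtain a where "x \<in> C" "\<forall>j\<in>J. x $ j = a"
    by (auto simp: const_subcode_def)
  then show "c *s x \<in> const_subcode C J"
    using vec.subspace_scale[OF assms] by (auto simp: const_subcode_def intro!: exI[of _ "c * a"])
qed

lemma const_subcode_nonzero_at_or_dual_word:
  fixes C :: "('a::field ^ 'n) set"
  assumes C: "vec.subspace C" and J: "card J < min_dist (dual_code C)"
  shows "(\<exists>x\<in>const_subcode C J. x $ j \<noteq> 0)
    \<or> (j \<notin> J \<and> (\<exists>y\<in>dual_code C. supp y \<subseteq> insert j J \<and> y $ j \<noteq> 0))"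
proof (cases "j \<in> J")
  case True
  obtain x where "x \<in> C" "\<forall>i\<in>J. x $ i = 1"
    using codeword_extends_if_short[OF C J, of "\<chi> i. 1"] by auto
  then have "x \<in> const_subcode C J" "x $ j \<noteq> 0"
    using True by (simp_all add: const_subcode_def)
  then show ?thesis by blast
next
  case False
  consider x where "x \<in> C" "\<forall>i\<in>insert j J. x $ i = axis j 1 $ i"
    | y where "y \<in> dual_code C" "supp y \<subseteq> insert j J" "dotp (axis j 1) y \<noteq> 0"
    using codeword_extends_or_dual_obstruction[OF C] by blast
  then show ?thesis
  proof cases
    case (1 x)
    then have "x \<in> const_subcode C J" "x $ j = 1"
      using False by (auto simp: const_subcode_def axis_def)
    then show ?thesis by auto
  next
    case (2 y)
    then show ?thesis
      using False by (auto simp: dotp_axis)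
  qed
qed

lemma Supp_const_subcode_even:
  fixes C :: "('a::field ^ 'n) set"
  assumes bin: "CARD('a) = 2" and C: "vec.subspace C"
    and J: "card J + 1 = min_dist (dual_code C)" and even: "even (min_dist (dual_code C))"
  shows "Supp (const_subcode C J) = UNIV"
  unfolding Supp_eq_UNIV_iff
proof
  fix j
  have short: "card J < min_dist (dual_code C)" using J by simp
  obtain x1 where x1: "x1 \<in> C" "\<forall>i\<in>J. x1 $ i = 1"
    using codeword_extends_if_short[OF C short, of "\<chi> i. 1"] by auto
  consider "\<exists>x\<in>const_subcode C J. x $ j \<noteq> 0"
    | y where "j \<notin> J" "y \<in> dual_code C" "supp y \<subseteq> insert j J" "y $ j \<noteq> 0"
    using const_subcode_nonzero_at_or_dual_word[OF C short] by blast
  then show "\<exists>x\<in>const_subcode C J. x $ j \<noteq> 0"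
  proof cases
    case 1
    then show ?thesis .
  next
    case (2 y)
    have "y = (\<chi> i. if i \<in> insert j J then 1 else 0)"
      by (rule dual_word_eq_indicator[OF bin 2(2) _ 2(3)]) (use 2(1,4) J in auto)
    then have "0 = (\<Sum>i\<in>insert j J. x1 $ i)"
      using dotp_dual_code[OF x1(1) 2(2)] dotp_indicator by metis
    also have "\<dots> = x1 $ j + of_nat (card J)"
      using 2(1) x1(2) by simp
    also have "\<dots> = x1 $ j + 1"
      using even J binary_of_nat[OF bin, of "card J"] by (simp add: even_Suc[symmetric])
    finally have "x1 $ j \<noteq> 0"
      by (metis add_0 zero_neq_one)
    moreover have "x1 \<in> const_subcode C J"
      using x1 by (simp add: const_subcode_def)
    ultimately show ?thesis by blast
  qed
qed

lemma exists_index_without_dual_word: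
  fixes C :: "('a::field ^ 'n) set"
  assumes C: "vec.subspace C"
    and short: "card K < min_dist (dual_code C)" and small: "card K < vec.dim C"
  shows "\<exists>m. m \<notin> K \<and> (\<forall>y\<in>dual_code C. supp y \<subseteq> insert m K \<longrightarrow> y = 0)"
proof (rule ccontr)
  assume "\<not> ?thesis"
  then have witness: "\<exists>y\<in>dual_code C. supp y \<subseteq> insert m K \<and> y \<noteq> 0" if "m \<notin> K" for m
    using that by blast
  have kernel_trivial: "z $ m = 0" if z: "z \<in> C" "restr K z = 0" for z m
  proof -
    have zK: "z $ i = 0" if "i \<in> K" for i
    proof -
      have "restr K z $ i = 0"
        using z(2) by simp
      then show ?thesis
        using that by (simp add: restr_def)
    qed
    show ?thesis
    proof (cases "m \<in> K")
      case True
      then show ?thesis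
        using zK by simp
    next
      case False
      then obtain y where y: "y \<in> dual_code C" "supp y \<subseteq> insert m K" "y \<noteq> 0"
        using witness by blast
      have "y $ m \<noteq> 0"
      proof
        assume "y $ m = 0"
        then have "supp y \<subseteq> K"
          using y(2) by (auto simp: supp_def)
        then show False
          using dual_word_eq_0_if_short[OF y(1) _ short] y(3) by blast
      qed
      have "z $ i * y $ i = 0" if "i \<in> UNIV - {m}" for i
        using that y(2) zK by (cases "i \<in> K") (auto simp: supp_def)
      then have "dotp z y = z $ m * y $ m"
        unfolding dotp_def by (simp add: sum.remove[of _ m] sum.neutral)
      then show ?thesis
        using dotp_dual_code[OF z(1) y(1)] \<open>y $ m \<noteq> 0\<close> by simp
    qed
  qed
  have "inj_on (restr K) C"
  proof (rule vec.linear_inj_on_iff_eq_0[OF linear_restr C, THEN iffD2], intro ballI impI)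
    fix z
    assume "z \<in> C" "restr K z = 0"
    then show "z = 0"
      using kernel_trivial by (simp add: vec_eq_iff)
  qed
  then have "vec.dim (restr K ` C) = vec.dim C"
    by (intro vec.dim_image_eq[OF linear_restr]) (simp add: vec.span_eq_iff[THEN iffD2, OF C])
  then have "vec.dim C = vec.dim (restr K ` C)" ..
  also have "\<dots> \<le> vec.dim {x :: 'a ^ 'n. \<forall>i. i \<notin> K \<longrightarrow> x $ i = 0}"
    by (rule vec.dim_subset) (auto simp: restr_def)
  also have "\<dots> = card K"
    by (rule dim_substandard_cart)
  finally show False
    using small by simp
qed

definition exchange_dual_word :: "('a::field ^ 'n) set \<Rightarrow> 'n set \<Rightarrow> 'n \<Rightarrow> bool" where
  "exchange_dual_word C I p \<longleftrightarrow>
     (\<exists>y\<in>dual_code C. \<exists>j. j \<notin> I \<and> supp y \<subseteq> insert j (I - {p}) \<and> y $ j \<noteq> 0)"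

lemma exchange_dual_word_unique:
  fixes C :: "('a::field ^ 'n) set"
  assumes bin: "CARD('a) = 2"
    and I: "card I = min_dist (dual_code C)" "4 < card I"
    and "p \<in> I" "q \<in> I" "exchange_dual_word C I p" "exchange_dual_word C I q"
  shows "p = q"
proof (rule ccontr)
  assume "p \<noteq> q"
  have indicator: "y = (\<chi> i. if i \<in> insert j (I - {r}) then 1 else 0)"
    if "r \<in> I" "y \<in> dual_code C" "j \<notin> I" "supp y \<subseteq> insert j (I - {r})" "y $ j \<noteq> 0" for r y j
  proof (rule dual_word_eq_indicator[OF bin that(2) _ that(4)])
    show "y \<noteq> 0" using that(5) by auto
    show "card (insert j (I - {r})) = min_dist (dual_code C)"
      using that(1,3) I by (simp add: card_Diff_singleton)
  qed
  obtain yp jp where yp: "yp \<in> dual_code C" "jp \<notin> I" "supp yp \<subseteq> insert jp (I - {p})" "yp $ jp \<noteq> 0"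
    using assms(6) unfolding exchange_dual_word_def by blast
  obtain yq jq where yq: "yq \<in> dual_code C" "jq \<notin> I" "supp yq \<subseteq> insert jq (I - {q})" "yq $ jq \<noteq> 0"
    using assms(7) unfolding exchange_dual_word_def by blast
  note yp_eq = indicator[OF \<open>p \<in> I\<close> yp] and yq_eq = indicator[OF \<open>q \<in> I\<close> yq]
  have "yp - yq \<in> dual_code C"
    using dual_code_diff[OF yp(1) yq(1)] .
  moreover have "supp (yp - yq) \<subseteq> set [p, q, jp, jq]"
    by (auto simp: yp_eq yq_eq supp_def)
  moreover have "card (set [p, q, jp, jq]) < min_dist (dual_code C)"
    using card_length[of "[p, q, jp, jq]"] I by simp
  ultimately have "yp - yq = 0"
    by (rule dual_word_eq_0_if_short)
  moreover have "(yp - yq) $ q \<noteq> 0"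
    using \<open>p \<noteq> q\<close> \<open>q \<in> I\<close> yq(2) by (auto simp: yp_eq yq_eq)
  ultimately show False by simp
qed

lemma exists_Supp_const_subcode_remove:
  fixes C :: "('a::field ^ 'n) set"
  assumes bin: "CARD('a) = 2" and C: "vec.subspace C"
    and I: "card I = min_dist (dual_code C)" "4 < card I"
    and I_free: "\<And>y. y \<in> dual_code C \<Longrightarrow> supp y \<subseteq> I \<Longrightarrow> y = 0"
  shows "\<exists>p\<in>I. Supp (const_subcode C (I - {p})) = UNIV"
proof -
  have "I \<noteq> {}"
    using I(2) by auto
  then obtain p1 where p1: "p1 \<in> I" by blast
  have "card (I - {p1}) \<noteq> 0"
    using p1 I(2) by (simp add: card_Diff_singleton)
  then have "I - {p1} \<noteq> {}" by auto
  then obtain p2 where p2: "p2 \<in> I" "p2 \<noteq> p1" by blast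
  have "\<not> (exchange_dual_word C I p1 \<and> exchange_dual_word C I p2)"
    using exchange_dual_word_unique[OF bin I p1 p2(1)] p2(2) by blast
  then obtain p where p: "p \<in> I" "\<not> exchange_dual_word C I p"
    using p1 p2(1) by blast
  have short: "card (I - {p}) < min_dist (dual_code C)"
    using p(1) I by (simp add: card_Diff_singleton)
  have "\<exists>x\<in>const_subcode C (I - {p}). x $ j \<noteq> 0" for j
  proof -
    consider "\<exists>x\<in>const_subcode C (I - {p}). x $ j \<noteq> 0"
      | y where "j \<notin> I - {p}" "y \<in> dual_code C" "supp y \<subseteq> insert j (I - {p})" "y $ j \<noteq> 0"
      using const_subcode_nonzero_at_or_dual_word[OF C short] by blast
    then show ?thesis
    proof cases
      case 1
      then show ?thesis .
    next
      case (2 y)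
      show ?thesis
      proof (cases "j \<in> I")
        case True
        then have "insert j (I - {p}) = I"
          using 2(1) p(1) by auto
        then have "y = 0"
          using I_free 2(2,3) by simp
        then show ?thesis
          using 2(4) by simp
      next
        case False
        then have "exchange_dual_word C I p"
          using 2 unfolding exchange_dual_word_def by blast
        then show ?thesis
          using p(2) by simp
      qed
    qed
  qed
  then show ?thesis
    using p(1) by (auto simp: Supp_eq_UNIV_iff)
qed

lemma exists_Supp_const_subcode:
  fixes C :: "('a::field ^ 'n) set"
  assumes bin: "CARD('a) = 2" and C: "vec.subspace C"
    and d: "4 \<le> min_dist (dual_code C)" "min_dist (dual_code C) \<le> vec.dim C"
  shows "\<exists>J. card J + 1 = min_dist (dual_code C) \<and> Supp (const_subcode C J) = UNIV"
proof -
  let ?d = "min_dist (dual_code C)"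
  have "?d - 1 \<le> CARD('n)"
    using d(2) dim_subset_UNIV_cart_gen[of C] by simp
  then obtain J0 :: "'n set" where J0: "card J0 = ?d - 1"
    using obtain_subset_with_card_n by blast
  show ?thesis
  proof (cases "even ?d")
    case True
    have "card J0 + 1 = ?d"
      using J0 d(1) by simp
    with Supp_const_subcode_even[OF bin C this True] show ?thesis
      by blast
  next
    case False
    have "card J0 < ?d" "card J0 < vec.dim C"
      using J0 d by auto
    then obtain m where m: "m \<notin> J0" "\<forall>y\<in>dual_code C. supp y \<subseteq> insert m J0 \<longrightarrow> y = 0"
      using exists_index_without_dual_word[OF C] by meson
    have I: "card (insert m J0) = ?d"
      using m(1) J0 d(1) by simp
    moreover have "?d \<noteq> 4"
      using False by auto
    ultimately have "4 < card (insert m J0)"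
      using d(1) by simp
    then obtain p where p: "p \<in> insert m J0" "Supp (const_subcode C (insert m J0 - {p})) = UNIV"
      using exists_Supp_const_subcode_remove[OF bin C I _ m(2)[rule_format]] by blast
    moreover have "card (insert m J0 - {p}) + 1 = ?d"
      using p(1) I d(1) by (simp add: card_Diff_singleton)
    ultimately show ?thesis by blast
  qed
qed

lemma dim_const_subcode:
  fixes C :: "('a::field ^ 'n) set"
  assumes C: "vec.subspace C" and a0: "a0 \<in> J"
    and unit: "\<And>j. j \<in> J \<Longrightarrow> \<exists>x\<in>C. \<forall>i\<in>J. x $ i = axis j 1 $ i"
  shows "vec.dim (const_subcode C J) + (card J - 1) \<le> vec.dim C"
proof -
  define E where "E A = {x \<in> C. \<forall>j\<in>A. x $ j = x $ a0}" for A
  have subE: "vec.subspace (E A)" for A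
    using C unfolding vec.subspace_def E_def by auto
  have "vec.dim (E A) + card A \<le> vec.dim C" if "A \<subseteq> J - {a0}" for A
    using finite[of A] that
  proof (induction A rule: finite_induct)
    case empty
    then show ?case by (simp add: E_def)
  next
    case (insert j A)
    obtain x where x: "x \<in> C" "\<forall>i\<in>J. x $ i = axis j 1 $ i"
      using unit insert.prems by blast
    have "i \<in> J" "i \<noteq> j" if "i \<in> A" for i
      using that insert by auto
    then have x_in: "x \<in> E A" and x_notin: "x \<notin> E (insert j A)"
      using x insert.prems a0 by (auto simp: E_def axis_def)
    have sub: "E (insert j A) \<subseteq> E A"
      by (auto simp: E_def)
    have "vec.dim (E (insert j A)) \<noteq> vec.dim (E A)"
    proof
      assume "vec.dim (E (insert j A)) = vec.dim (E A)"
      then have "E (insert j A) = E A"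
        using vec.subspace_dim_equal[OF subE subE sub] by simp
      with x_in x_notin show False by blast
    qed
    with vec.dim_subset[OF sub] have "vec.dim (E (insert j A)) < vec.dim (E A)"
      by simp
    then show ?case
      using insert by simp
  qed
  moreover have "E (J - {a0}) = const_subcode C J"
    using a0 by (auto simp: E_def const_subcode_def)
  ultimately show ?thesis
    using a0 by (metis card_Diff_singleton order_refl)
qed

lemma cov_dim_le_dim:
  fixes D :: "('a::field ^ 'n) set"
  assumes D: "vec.subspace D" "D \<subseteq> C" "Supp D = UNIV"
  shows "cov_dim C \<le> enat (vec.dim D)"
proof -
  have "Supp C = UNIV"
    using D(2,3) unfolding Supp_def by blast
  obtain j :: 'n where True by simp
  then obtain x where "x \<in> D" "x $ j \<noteq> 0"
    using D(3) Supp_eq_UNIV_iff by blast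
  then have "\<not> D \<subseteq> {0}" by auto
  then have "0 < vec.dim D"
    using vec.dim_eq_0 by (metis gr0I)
  then have "(LEAST r. 0 < r \<and> (\<exists>D'. vec.subspace D' \<and> D' \<subseteq> C \<and> vec.dim D' = r \<and> Supp D' = UNIV))
      \<le> vec.dim D"
    using D by (intro Least_le) blast
  with \<open>Supp C = UNIV\<close> show ?thesis
    by (simp add: cov_dim_def)
qed

theorem mainTheorem8:
  fixes C :: "('a::field ^ 'n) set" and k :: nat
  assumes "CARD('a) = 2"
    and "vec.subspace C"
    and "vec.dim C = k"
    and "dual_code C \<noteq> {0}"
    and "3 < min_dist (dual_code C)"
    and "min_dist (dual_code C) < k + 1"
  shows "cov_dim C \<le> enat (k - min_dist (dual_code C) + 2)"
proof -
  let ?d = "min_dist (dual_code C)"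
  obtain J where J: "card J + 1 = ?d" "Supp (const_subcode C J) = UNIV"
    using exists_Supp_const_subcode[OF assms(1,2)] assms(3,5,6) by auto
  then obtain a0 where a0: "a0 \<in> J"
    using assms(5) by fastforce
  have "\<exists>x\<in>C. \<forall>i\<in>J. x $ i = axis j 1 $ i" for j
    using J(1) by (intro codeword_extends_if_short[OF assms(2)]) simp
  then have dim_le: "vec.dim (const_subcode C J) + (card J - 1) \<le> k"
    using dim_const_subcode[OF assms(2) a0] assms(3) by blast
  have "cov_dim C \<le> enat (vec.dim (const_subcode C J))"
    by (rule cov_dim_le_dim[OF subspace_const_subcode[OF assms(2)] _ J(2)])
      (auto simp: const_subcode_def)
  also have "\<dots> \<le> enat (k - ?d + 2)"
    using dim_le J(1) assms(5) by simp
  finally show ?thesis .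
qed

end
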